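(* Let $n\ge1$ and let $\mathbf{P}_{pen}=[p_{ij}]_{i,j=1}^{n+3}$ be a real symmetric non-negative definite matrix such that the $2\times2$ matrix $\begin{pmatrix}p_{1,1}&p_{1,n+3}\\ p_{n+3,1}&p_{n+3,n+3}\end{pmatrix}$ is invertible. Let $\Pi:\mathbb{R}^{n+3}\to\mathbb{R}^{n+1}$, $\Pi(u_1,\boldsymbol{p}^T,u_{n+1})^T=\boldsymbol{p}$, and for $\lambda>0$ let $\mathbf{H}_{\mathbf{P}_{pen}}(\lambda)=(\lambda\mathbf{P}_{pen}+\Pi^T\Pi)^{-1}$, so that $\mathbf{H}_{\mathbf{P}_{pen}}(\lambda)(0,\boldsymbol{y}^T,0)^T$ is the unique minimizer over $(u_1,\boldsymbol{p},u_{n+1})\in\mathbb{R}\times\mathbb{R}^{n+1}\times\mathbb{R}$ of $\lambda(u_1,\boldsymbol{p}^T,u_{n+1})\mathbf{P}_{pen}(u_1,\boldsymbol{p}^T,u_{n+1})^T+\|\boldsymbol{y}-\boldsymbol{p}\|^2$. Let $\boldsymbol{y}\in\mathbb{R}^{n+1}$. (1) As $\lambda\to0^+$, $\mathbf{H}_{\mathbf{P}_{pen}}(\lambda)(0,\boldsymbol{y}^T,0)^T\to(u_1^0,\boldsymbol{y}^T,u_{n+1}^0)^T$, where $(u_1^0,u_{n+1}^0)$ is a minimizer of $(u_1,u_{n+1})\mapsto(u_1,\boldsymbol{y}^T,u_{n+1})\mathbf{P}_{pen}(u_1,\boldsymbol{y}^T,u_{n+1})^T$, i.e. a solution of $$u_1p_{1,1}+u_{n+1}p_{1,n+3}=-\sum_{i=1}^{n+1}y_ip_{1,i+1},\qquad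 u_1p_{n+3,1}+u_{n+1}p_{n+3,n+3}=-\sum_{i=1}^{n+1}y_ip_{n+3,i+1}.$$ In particular, if $\boldsymbol{y}$ is not orthogonal to the space spanned by $(p_{1,j}:j=2,\dots,n+2)^T$ and $(p_{n+3,j}:j=2,\dots,n+2)^T$, then $u_1^0$ and $u_{n+1}^0$ are not both zero. (2) As $\lambda\to+\infty$, $\mathbf{H}_{\mathbf{P}_{pen}}(\lambda)(0,\boldsymbol{y}^T,0)^T\to\arg\min\{\|\boldsymbol{y}-\boldsymbol{p}\|^2:\ \mathbf{P}_{pen}(u_1,\boldsymbol{p}^T,u_{n+1})^T=0\}$.
   Context: Vectors of $\mathbb{R}^{n+3}$ are written $(u_1,\boldsymbol{p}^T,u_{n+1})^T$ with $u_1,u_{n+1}\in\mathbb{R}$ and $\boldsymbol{p}\in\mathbb{R}^{n+1}$ (in the paper these are the coordinates of a $C^2$ cubic spline: end second derivatives and knot values). $\|\cdot\|$ is the Euclidean norm. *)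

theory Defs
  imports "HOL-Analysis.Analysis"
begin

text \<open>Finite real matrices/vectors are represented by functions on nat with
explicit dimensions; all indices are 0-based.  A vector of R^(n+3) written
(u_1, p^T, u_(n+1))^T in the paper has u_1 at index 0, p_i at index i (i=1..n+1)
and u_(n+1) at index n+2.  The paper's entry p_(i,j) is P (i-1) (j-1).\<close>

type_synonym rmat = "nat \<Rightarrow> nat \<Rightarrow> real"
type_synonym rvec = "nat \<Rightarrow> real"

definition mmult :: "nat \<Rightarrow> rmat \<Rightarrow> rmat \<Rightarrow> rmat" where
  "mmult k A B = (\<lambda>i j. \<Sum>l<k. A i l * B l j)"

definition mvmult :: "nat \<Rightarrow> rmat \<Rightarrow> rvec \<Rightarrow> rvec" where
  "mvmult k A x = (\<lambda>i. \<Sum>j<k. A i j * x j)"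

definition transp :: "rmat \<Rightarrow> rmat" where
  "transp A = (\<lambda>i j. A j i)"

definition is_inverse :: "nat \<Rightarrow> rmat \<Rightarrow> rmat \<Rightarrow> bool" where
  "is_inverse N A B \<longleftrightarrow>
     (\<forall>i<N. \<forall>j<N. mmult N A B i j = (if i = j then 1 else 0)
                 \<and> mmult N B A i j = (if i = j then 1 else 0))"

definition minv :: "nat \<Rightarrow> rmat \<Rightarrow> rmat" where
  "minv N A = (THE B. is_inverse N A B \<and> (\<forall>i j. N \<le> i \<or> N \<le> j \<longrightarrow> B i j = 0))"

definition quadform :: "nat \<Rightarrow> rmat \<Rightarrow> rvec \<Rightarrow> real" where
  "quadform N P x = (\<Sum>i<N. \<Sum>j<N. x i * P i j * x j)"

definition symmetric_mat :: "nat \<Rightarrow> rmat \<Rightarrow> bool" where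
  "symmetric_mat N P \<longleftrightarrow> (\<forall>i<N. \<forall>j<N. P i j = P j i)"

definition nonneg_definite :: "nat \<Rightarrow> rmat \<Rightarrow> bool" where
  "nonneg_definite N P \<longleftrightarrow> (\<forall>x. quadform N P x \<ge> 0)"

text \<open>The projection Pi : R^(n+3) -> R^(n+1), (u_1,p,u_(n+1)) |-> p, as an (n+1) x (n+3) matrix.\<close>
definition PiM :: "nat \<Rightarrow> rmat" where
  "PiM n = (\<lambda>i j. if i \<le> n \<and> j = i + 1 then 1 else 0)"

definition Hpen :: "nat \<Rightarrow> rmat \<Rightarrow> real \<Rightarrow> rmat" where
  "Hpen n P lam = minv (n + 3) (\<lambda>i j. lam * P i j + mmult (n + 1) (transp (PiM n)) (PiM n) i j)"

text \<open>The vector (0, y^T, 0)^T = Pi^T y.\<close>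
definition embed0 :: "nat \<Rightarrow> rvec \<Rightarrow> rvec" where
  "embed0 n y = mvmult (n + 1) (transp (PiM n)) y"

definition joinv :: "nat \<Rightarrow> real \<Rightarrow> rvec \<Rightarrow> real \<Rightarrow> rvec" where
  "joinv n a y b = (\<lambda>i. if i = 0 then a else if i \<le> n + 1 then y (i - 1) else b)"

end

theory Submission
  imports Defs "Jordan_Normal_Form.Determinant"
begin

text \<open>For lam > 0 the fit x = H(lam) (0, y, 0) solves lam P x + Pi^T Pi x = Pi^T y; in particular
  the two end rows of P x vanish. Since the corner 2 x 2 block of P is invertible, Cramer's rule makes
  the end coordinates of any vector with vanishing end rows a linear function of its interior; the
  vector so obtained from the interior y is the completion z of y, and it minimises the penalty over
  the free end coordinates. Testing the equation against x - z and using that P is nonnegative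
  definite gives |Pi x - y| <= lam |P z|, hence x -> z as lam -> 0. As lam -> infinity the interior of
  x stays bounded by |y| and the ends follow it by Cramer's rule; every limit point lies in ker P and
  minimises |y - Pi v| over ker P, and this minimiser is unique (strict convexity in the interior, the
  ends being determined again), so x converges to it.\<close>

section \<open>Matrix algebra on index ranges\<close>

lemma mvmult_mmult: "mvmult N A (mvmult N B x) i = mvmult N (mmult N A B) x i"
proof -
  have "mvmult N A (mvmult N B x) i = (\<Sum>j<N. \<Sum>k<N. A i j * B j k * x k)"
    unfolding mvmult_def by (simp add: sum_distrib_left mult.assoc)
  also have "\<dots> = (\<Sum>k<N. \<Sum>j<N. A i j * B j k * x k)"
    by (rule sum.swap)
  also have "\<dots> = mvmult N (mmult N A B) x i"
    unfolding mvmult_def mmult_def by (simp add: sum_distrib_right)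
  finally show ?thesis .
qed

lemma mvmult_cong: "(\<And>j. j < N \<Longrightarrow> x j = x' j) \<Longrightarrow> mvmult N A x i = mvmult N A x' i"
  unfolding mvmult_def by (intro sum.cong) auto

lemma mvmult_identity:
  assumes "\<forall>j<N. M i j = (if i = j then 1 else 0)" "i < N"
  shows "mvmult N M x i = x i"
proof -
  have "mvmult N M x i = (\<Sum>j<N. if i = j then x j else 0)"
    unfolding mvmult_def using assms(1) by (intro sum.cong) auto
  also have "\<dots> = x i"
    using assms(2) by (simp add: sum.delta)
  finally show ?thesis .
qed

lemma is_inverse_mvmult_cancel:
  assumes "is_inverse N A B" "i < N"
  shows "mvmult N A (mvmult N B x) i = x i" "mvmult N B (mvmult N A x) i = x i"
  using assms by (auto simp: mvmult_mmult is_inverse_def intro!: mvmult_identity)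

lemma mvmult_lincomb:
  "mvmult N A (\<lambda>j. a * u j + b * v j) i = a * mvmult N A u i + b * mvmult N A v i"
  unfolding mvmult_def by (simp add: sum.distrib sum_distrib_left algebra_simps)

lemma mvmult_diff: "mvmult N A (\<lambda>j. u j - v j) i = mvmult N A u i - mvmult N A v i"
  unfolding mvmult_def by (simp add: right_diff_distrib sum_subtractf)

lemma is_inverse_unique:
  assumes "is_inverse N A B" "\<forall>i j. N \<le> i \<or> N \<le> j \<longrightarrow> B i j = 0"
    and "is_inverse N A B'" "\<forall>i j. N \<le> i \<or> N \<le> j \<longrightarrow> B' i j = 0"
  shows "B = B'"
proof (intro ext)
  fix i j
  show "B i j = B' i j"
  proof (cases "i < N \<and> j < N")
    case True
    define e where "e = (\<lambda>k. if k = j then 1 else 0 :: real)"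
    have column: "mvmult N M e k = M k j" for M k
      using True by (simp add: mvmult_def e_def if_distrib sum.delta cong: if_cong)
    have "B i j = mvmult N B e i"
      by (rule column[symmetric])
    also have "\<dots> = mvmult N B (mvmult N A (mvmult N B' e)) i"
      using True assms(3) by (intro mvmult_cong) (simp add: is_inverse_mvmult_cancel)
    also have "\<dots> = mvmult N B' e i"
      using True assms(1) by (simp add: is_inverse_mvmult_cancel)
    also have "\<dots> = B' i j"
      by (rule column)
    finally show ?thesis .
  next
    case False
    then show ?thesis using assms(2,4) by auto
  qed
qed

lemma is_inverse_exists:
  fixes A :: rmat
  assumes inj: "\<And>x. \<forall>i<N. mvmult N A x i = 0 \<Longrightarrow> \<forall>i<N. x i = 0"
  shows "\<exists>B. is_inverse N A B \<and> (\<forall>i j. N \<le> i \<or> N \<le> j \<longrightarrow> B i j = 0)"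
proof -
  define JA where "JA = mat N N (\<lambda>(i,j). A i j)"
  have JA: "JA \<in> carrier_mat N N" unfolding JA_def by auto
  have "det JA \<noteq> 0"
  proof
    assume "det JA = 0"
    then obtain v where v: "v \<in> carrier_vec N" "v \<noteq> 0\<^sub>v N" "JA *\<^sub>v v = 0\<^sub>v N"
      using det_0_iff_vec_prod_zero[OF JA] by auto
    define x where "x = (\<lambda>j. if j < N then v $ j else 0)"
    have "mvmult N A x i = (JA *\<^sub>v v) $ i" if "i < N" for i
      using that v(1) unfolding JA_def mvmult_def x_def
      by (simp add: scalar_prod_def atLeast0LessThan)
    then have "\<forall>i<N. x i = 0" using inj v(3) by simp
    then have "v = 0\<^sub>v N" using v(1) unfolding x_def by (intro eq_vecI) auto
    with v(2) show False by simp
  qed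
  from det_non_zero_imp_unit[OF JA this, unfolded Units_def, of "()"]
  obtain B where B: "B \<in> carrier_mat N N" and BA: "B * JA = 1\<^sub>m N" and AB: "JA * B = 1\<^sub>m N"
    by (auto simp: ring_mat_def)
  define B' where "B' = (\<lambda>i j. if i < N \<and> j < N then B $$ (i,j) else 0)"
  have "mmult N A B' i j = (JA * B) $$ (i,j)" "mmult N B' A i j = (B * JA) $$ (i,j)"
    if "i < N" "j < N" for i j
    using that B unfolding JA_def mmult_def B'_def by (simp_all add: scalar_prod_def atLeast0LessThan)
  then have "is_inverse N A B'"
    unfolding is_inverse_def using AB BA by simp
  then show ?thesis by (intro exI[of _ B']) (auto simp: B'_def)
qed

lemma minv_is_inverse:
  assumes "\<exists>B. is_inverse N A B \<and> (\<forall>i j. N \<le> i \<or> N \<le> j \<longrightarrow> B i j = 0)"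
  shows "is_inverse N A (minv N A)"
proof -
  have "\<exists>!B. is_inverse N A B \<and> (\<forall>i j. N \<le> i \<or> N \<le> j \<longrightarrow> B i j = 0)"
    using assms is_inverse_unique by blast
  from theI'[OF this] show ?thesis unfolding minv_def by blast
qed

definition bilin :: "nat \<Rightarrow> rmat \<Rightarrow> rvec \<Rightarrow> rvec \<Rightarrow> real" where
  "bilin N P u v = (\<Sum>i<N. u i * mvmult N P v i)"

lemma quadform_eq_bilin: "quadform N P x = bilin N P x x"
  unfolding quadform_def bilin_def mvmult_def by (simp add: sum_distrib_left mult.assoc)

lemma bilin_commute:
  assumes "symmetric_mat N P"
  shows "bilin N P u v = bilin N P v u"
proof -
  have "bilin N P u v = (\<Sum>i<N. \<Sum>j<N. u i * P i j * v j)"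
    unfolding bilin_def mvmult_def by (simp add: sum_distrib_left mult.assoc)
  also have "\<dots> = (\<Sum>j<N. \<Sum>i<N. v j * P j i * u i)"
    using assms unfolding symmetric_mat_def
    by (subst sum.swap) (intro sum.cong refl, auto simp: mult_ac)
  also have "\<dots> = bilin N P v u"
    unfolding bilin_def mvmult_def by (simp add: sum_distrib_left mult.assoc)
  finally show ?thesis .
qed

lemma bilin_add_left: "bilin N P (\<lambda>i. u i + v i) w = bilin N P u w + bilin N P v w"
  unfolding bilin_def by (simp add: distrib_right sum.distrib)

lemma bilin_add_right: "bilin N P u (\<lambda>i. v i + w i) = bilin N P u v + bilin N P u w"
  unfolding bilin_def mvmult_def by (simp add: distrib_left sum.distrib)

lemma bilin_nonneg: "nonneg_definite N P \<Longrightarrow> bilin N P x x \<ge> 0"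
  unfolding nonneg_definite_def by (metis quadform_eq_bilin)

lemma sum_split_ends: "(\<Sum>i<n+3. f i) = f 0 + (\<Sum>i\<le>n. f (Suc i)) + (f (n+2) :: real)"
proof -
  have "(\<Sum>i<n+3. f i) = (\<Sum>i<Suc (Suc n). f i) + f (n+2)"
    by (simp add: numeral_3_eq_3)
  also have "(\<Sum>i<Suc (Suc n). f i) = f 0 + (\<Sum>i\<le>n. f (Suc i))"
    by (simp only: lessThan_Suc_atMost sum.atMost_Suc_shift)
  finally show ?thesis .
qed

lemma less_n3_cases:
  assumes "i < n+3"
  obtains "i = 0" | "i = n+2" | j where "j \<le> n" "i = Suc j"
proof (cases i)
  case 0
  then show ?thesis using that(1) by simp
next
  case (Suc j)
  then show ?thesis using assms that(2,3) by (cases "j = n+1") auto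
qed

lemma cramer2:
  fixes a b c e u w r s :: real
  assumes "a * e - b * c \<noteq> 0"
  shows "a * u + b * w = r \<and> c * u + e * w = s \<longleftrightarrow>
           u = (e * r - b * s) / (a * e - b * c) \<and> w = (a * s - c * r) / (a * e - b * c)"
proof
  assume "a * u + b * w = r \<and> c * u + e * w = s"
  then have "r = a * u + b * w" "s = c * u + e * w" by auto
  then show "u = (e * r - b * s) / (a * e - b * c) \<and> w = (a * s - c * r) / (a * e - b * c)"
    using assms by (simp add: field_simps)
next
  assume "u = (e * r - b * s) / (a * e - b * c) \<and> w = (a * s - c * r) / (a * e - b * c)"
  with assms have u: "(a * e - b * c) * u = e * r - b * s" and w: "(a * e - b * c) * w = a * s - c * r"
    by auto
  have "(a * e - b * c) * (a * u + b * w) = a * ((a * e - b * c) * u) + b * ((a * e - b * c) * w)"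
       "(a * e - b * c) * (c * u + e * w) = c * ((a * e - b * c) * u) + e * ((a * e - b * c) * w)"
    by (simp_all add: algebra_simps)
  then have "(a * e - b * c) * (a * u + b * w) = (a * e - b * c) * r"
       "(a * e - b * c) * (c * u + e * w) = (a * e - b * c) * s"
    unfolding u w by (simp_all add: algebra_simps)
  with assms show "a * u + b * w = r \<and> c * u + e * w = s"
    by simp
qed

section \<open>Limits along subsequences\<close>

lemma tendsto_at_top_by_subsequences:
  fixes f :: "real \<Rightarrow> 'a::metric_space"
  assumes "\<And>X. \<forall>k. X k \<ge> c \<Longrightarrow> filterlim X at_top sequentially \<Longrightarrow>
             \<exists>r. strict_mono r \<and> (\<lambda>k. f (X (r k))) \<longlonglongrightarrow> l"
  shows "(f \<longlongrightarrow> l) at_top"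
proof (rule tendsto_at_topI_sequentially)
  fix X :: "nat \<Rightarrow> real"
  assume X: "filterlim X at_top sequentially"
  define X' where "X' k = max c (X k)" for k
  have X': "filterlim X' at_top sequentially"
    unfolding X'_def by (rule filterlim_at_top_mono[OF X]) auto
  have "(\<lambda>k. f (X' k)) \<longlonglongrightarrow> l"
  proof (rule ccontr)
    assume "\<not> (\<lambda>k. f (X' k)) \<longlonglongrightarrow> l"
    then obtain \<epsilon> where "\<epsilon> > 0" and "\<not> eventually (\<lambda>k. dist (f (X' k)) l < \<epsilon>) sequentially"
      unfolding tendsto_iff by blast
    then have "infinite {k. \<epsilon> \<le> dist (f (X' k)) l}"
      unfolding infinite_nat_iff_unbounded_le eventually_sequentially by (auto simp: not_less)
    from infinite_enumerate[OF this]
    obtain r :: "nat \<Rightarrow> nat" where r: "strict_mono r" "\<forall>k. \<epsilon> \<le> dist (f (X' (r k))) l"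
      by auto
    have "filterlim (\<lambda>k. X' (r k)) at_top sequentially"
      by (rule filterlim_compose[OF X' filterlim_subseq[OF r(1)]])
    then obtain s where "(\<lambda>k. f (X' (r (s k)))) \<longlonglongrightarrow> l"
      using assms[of "\<lambda>k. X' (r k)"] by (auto simp: X'_def)
    then have "eventually (\<lambda>k. dist (f (X' (r (s k)))) l < \<epsilon>) sequentially"
      using \<open>\<epsilon> > 0\<close> by (rule tendstoD)
    then obtain k where "dist (f (X' (r (s k)))) l < \<epsilon>"
      unfolding eventually_sequentially by blast
    with r(2) show False by (meson not_less)
  qed
  moreover have "eventually (\<lambda>k. f (X' k) = f (X k)) sequentially"
    using filterlim_at_top_dense[THEN iffD1, OF X, rule_format, of c]
    by eventually_elim (simp add: X'_def)
  ultimately show "(\<lambda>k. f (X k)) \<longlonglongrightarrow> l"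
    by (rule Lim_transform_eventually)
qed

lemma bounded_coordinates_convergent_subseq:
  fixes X :: "nat \<Rightarrow> nat \<Rightarrow> real"
  assumes "finite I" "\<And>k i. i \<in> I \<Longrightarrow> \<bar>X k i\<bar> \<le> C"
  shows "\<exists>r l. strict_mono r \<and> (\<forall>i\<in>I. (\<lambda>k. X (r k) i) \<longlonglongrightarrow> l i)"
proof -
  have "bounded ((\<lambda>x. x i) ` range X)" if "i \<in> I" for i
    using assms(2)[OF that] by (intro boundedI[of _ C]) auto
  then have "\<forall>d\<subseteq>I. \<exists>l::rvec. \<exists>r. strict_mono r \<and>
      (\<forall>\<epsilon>>0. eventually (\<lambda>k. \<forall>i\<in>d. dist (X (r k) i) (l i) < \<epsilon>) sequentially)"
    by (intro compact_lemma_general[where proj = "\<lambda>x i. x i" and unproj = id]) (auto simp: assms(1))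
  from this[rule_format, OF subset_refl]
  obtain l r where r: "strict_mono r" and
      close: "\<forall>\<epsilon>>0. eventually (\<lambda>k. \<forall>i\<in>I. dist (X (r k) i) (l i) < \<epsilon>) sequentially"
    by blast
  have "(\<lambda>k. X (r k) i) \<longlonglongrightarrow> l i" if "i \<in> I" for i
  proof (rule tendstoI)
    fix \<epsilon> :: real
    assume "\<epsilon> > 0"
    have "eventually (\<lambda>k. \<forall>i\<in>I. dist (X (r k) i) (l i) < \<epsilon>) sequentially"
      using close \<open>\<epsilon> > 0\<close> by blast
    then show "eventually (\<lambda>k. dist (X (r k) i) (l i) < \<epsilon>) sequentially"
      by (rule eventually_mono) (use that in blast)
  qed
  with r show ?thesis
    by blast
qed

section \<open>The penalised fit\<close>

lemma mvmult_split: "mvmult (n+3) P x i = P i 0 * x 0 + (\<Sum>j\<le>n. P i (Suc j) * x (Suc j)) + P i (n+2) * x (n+2)"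
  unfolding mvmult_def by (rule sum_split_ends)

lemma bilin_split:
  "bilin (n+3) P u v = u 0 * mvmult (n+3) P v 0 + (\<Sum>j\<le>n. u (Suc j) * mvmult (n+3) P v (Suc j))
     + u (n+2) * mvmult (n+3) P v (n+2)"
  unfolding bilin_def by (rule sum_split_ends)

definition interior_ind :: "nat \<Rightarrow> nat \<Rightarrow> real" where
  "interior_ind n i = (if 1 \<le> i \<and> i \<le> n + 1 then 1 else 0)"

lemma sum_interior_ind: "(\<Sum>i<n+3. interior_ind n i * f i) = (\<Sum>j\<le>n. f (Suc j))"
  by (simp add: sum_split_ends interior_ind_def)

lemma PiM_gram: "mmult (n + 1) (transp (PiM n)) (PiM n) i j = (if i = j then interior_ind n i else 0)"
proof -
  have "mmult (n + 1) (transp (PiM n)) (PiM n) i j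
      = (\<Sum>l<n+1. if l = i - 1 then (if i = j \<and> 1 \<le> i then 1 else 0) else 0)"
    unfolding mmult_def transp_def PiM_def by (intro sum.cong) auto
  then show ?thesis
    unfolding interior_ind_def by (auto simp: sum.delta')
qed

lemma embed0_eq_joinv: "embed0 n y = joinv n 0 y 0"
proof
  fix i
  have "embed0 n y i = (\<Sum>l<n+1. if l = i - 1 then (if 1 \<le> i then y l else 0) else 0)"
    unfolding embed0_def mvmult_def transp_def PiM_def by (intro sum.cong) auto
  then show "embed0 n y i = joinv n 0 y 0 i"
    unfolding joinv_def by (auto simp: sum.delta')
qed

definition pen_matrix :: "nat \<Rightarrow> rmat \<Rightarrow> real \<Rightarrow> rmat" where
  "pen_matrix n P lam = (\<lambda>i j. lam * P i j + mmult (n + 1) (transp (PiM n)) (PiM n) i j)"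

lemma Hpen_eq_minv: "Hpen n P lam = minv (n + 3) (pen_matrix n P lam)"
  unfolding Hpen_def pen_matrix_def by (rule refl)

lemma mvmult_pen_matrix:
  assumes "i < n+3"
  shows "mvmult (n+3) (pen_matrix n P lam) x i = lam * mvmult (n+3) P x i + interior_ind n i * x i"
proof -
  have "mvmult (n+3) (pen_matrix n P lam) x i
      = (\<Sum>j<n+3. lam * (P i j * x j) + (if i = j then interior_ind n i * x j else 0))"
    unfolding mvmult_def pen_matrix_def PiM_gram by (intro sum.cong) (auto simp: algebra_simps)
  also have "\<dots> = lam * mvmult (n+3) P x i + interior_ind n i * x i"
    using assms by (simp add: sum.distrib sum_distrib_left mvmult_def sum.delta)
  finally show ?thesis .
qed

lemma pen_energy:
  "(\<Sum>i<n+3. x i * (lam * mvmult (n+3) P x i + interior_ind n i * x i))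
     = lam * bilin (n+3) P x x + (\<Sum>j\<le>n. (x (Suc j))\<^sup>2)"
proof -
  have "(\<Sum>i<n+3. x i * (lam * mvmult (n+3) P x i + interior_ind n i * x i))
     = (\<Sum>i<n+3. lam * (x i * mvmult (n+3) P x i) + interior_ind n i * (x i)\<^sup>2)"
    by (intro sum.cong) (auto simp: algebra_simps power2_eq_square)
  then show ?thesis
    by (simp only: sum.distrib sum_distrib_left[symmetric] bilin_def sum_interior_ind)
qed

definition pen_fit :: "nat \<Rightarrow> rmat \<Rightarrow> rvec \<Rightarrow> real \<Rightarrow> rvec" where
  "pen_fit n P y lam = mvmult (n + 3) (Hpen n P lam) (embed0 n y)"

definition in_kernel :: "nat \<Rightarrow> rmat \<Rightarrow> rvec \<Rightarrow> bool" where
  "in_kernel N P v \<longleftrightarrow> (\<forall>i<N. mvmult N P v i = 0)"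

definition kernel_least_squares :: "nat \<Rightarrow> rmat \<Rightarrow> rvec \<Rightarrow> rvec \<Rightarrow> bool" where
  "kernel_least_squares n P y w \<longleftrightarrow> in_kernel (n + 3) P w \<and>
     (\<forall>v. in_kernel (n + 3) P v \<longrightarrow> (\<Sum>i\<le>n. (y i - w (i + 1))\<^sup>2) \<le> (\<Sum>i\<le>n. (y i - v (i + 1))\<^sup>2))"

locale spline_penalty =
  fixes n :: nat and P :: rmat
  assumes sym: "symmetric_mat (n + 3) P"
    and psd: "nonneg_definite (n + 3) P"
    and det: "P 0 0 * P (n + 2) (n + 2) - P 0 (n + 2) * P (n + 2) 0 \<noteq> 0"
begin

definition coupling :: "nat \<Rightarrow> rvec \<Rightarrow> real" where
  "coupling r y = (\<Sum>i\<le>n. y i * P r (i + 1))"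

definition first_end :: "rvec \<Rightarrow> real" where
  "first_end y = (P 0 (n+2) * coupling (n+2) y - P (n+2) (n+2) * coupling 0 y)
                 / (P 0 0 * P (n + 2) (n + 2) - P 0 (n + 2) * P (n + 2) 0)"

definition last_end :: "rvec \<Rightarrow> real" where
  "last_end y = (P (n+2) 0 * coupling 0 y - P 0 0 * coupling (n+2) y)
                 / (P 0 0 * P (n + 2) (n + 2) - P 0 (n + 2) * P (n + 2) 0)"

definition completion :: "rvec \<Rightarrow> rvec" where
  "completion y = joinv n (first_end y) y (last_end y)"

lemma end_equations_iff:
  "u1 * P 0 0 + u2 * P 0 (n+2) = - coupling 0 y \<and> u1 * P (n+2) 0 + u2 * P (n+2) (n+2) = - coupling (n+2) y
   \<longleftrightarrow> u1 = first_end y \<and> u2 = last_end y"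
  using cramer2[OF det, of u1 u2 "- coupling 0 y" "- coupling (n+2) y"]
  unfolding first_end_def last_end_def by (simp add: algebra_simps)

(* n + 2 is written in its simp normal form Suc (Suc n) *)
lemma completion_simps:
  "completion y 0 = first_end y" "j \<le> n \<Longrightarrow> completion y (Suc j) = y j"
  "completion y (Suc (Suc n)) = last_end y"
  by (simp_all add: completion_def joinv_def)

lemma completion_cong:
  assumes "\<And>j. j \<le> n \<Longrightarrow> y j = y' j" "i < n+3"
  shows "completion y i = completion y' i"
proof -
  have "coupling r y = coupling r y'" for r
    unfolding coupling_def using assms(1) by (intro sum.cong) auto
  with assms(2) show ?thesis
    by (cases rule: less_n3_cases) (auto simp: completion_simps first_end_def last_end_def assms(1))
qed

lemma completion_zero: "completion (\<lambda>_. 0) = (\<lambda>_. 0)"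
  by (simp add: fun_eq_iff completion_def joinv_def first_end_def last_end_def coupling_def)

lemma end_rows_iff:
  "mvmult (n+3) P x 0 = 0 \<and> mvmult (n+3) P x (n+2) = 0 \<longleftrightarrow>
   x 0 = first_end (\<lambda>j. x (Suc j)) \<and> x (n+2) = last_end (\<lambda>j. x (Suc j))"
proof -
  have "(\<Sum>j\<le>n. P r (Suc j) * x (Suc j)) = coupling r (\<lambda>j. x (Suc j))" for r
    unfolding coupling_def by (simp add: mult.commute)
  then show ?thesis
    unfolding mvmult_split end_equations_iff[symmetric] by (auto simp: algebra_simps)
qed

lemma mvmult_completion_ends:
  "mvmult (n+3) P (completion y) 0 = 0" "mvmult (n+3) P (completion y) (n+2) = 0"
proof -
  have "coupling r (\<lambda>j. completion y (Suc j)) = coupling r y" for r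
    unfolding coupling_def by (intro sum.cong) (simp_all add: completion_simps)
  then have "first_end (\<lambda>j. completion y (Suc j)) = first_end y"
       "last_end (\<lambda>j. completion y (Suc j)) = last_end y"
    by (simp_all add: first_end_def last_end_def)
  then show "mvmult (n+3) P (completion y) 0 = 0" "mvmult (n+3) P (completion y) (n+2) = 0"
    using end_rows_iff[of "completion y"] by (simp_all add: completion_simps)
qed

lemma eq_completion:
  assumes "mvmult (n+3) P x 0 = 0" "mvmult (n+3) P x (n+2) = 0" "i < n+3"
  shows "x i = completion (\<lambda>j. x (Suc j)) i"
  using assms(3) end_rows_iff[of x] assms(1,2)
  by (cases rule: less_n3_cases) (auto simp: completion_simps)

lemma tendsto_completion:
  assumes rows: "eventually (\<lambda>t. mvmult (n+3) P (x t) 0 = 0 \<and> mvmult (n+3) P (x t) (n+2) = 0) F"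
    and interior: "\<And>j. j \<le> n \<Longrightarrow> ((\<lambda>t. x t (Suc j)) \<longlongrightarrow> m j) F"
    and "i < n+3"
  shows "((\<lambda>t. x t i) \<longlongrightarrow> completion m i) F"
proof -
  have "((\<lambda>t. coupling r (\<lambda>j. x t (Suc j))) \<longlongrightarrow> coupling r m) F" for r
    unfolding coupling_def by (intro tendsto_sum tendsto_mult tendsto_const interior) auto
  with \<open>i < n+3\<close> det have "((\<lambda>t. completion (\<lambda>j. x t (Suc j)) i) \<longlongrightarrow> completion m i) F"
    by (cases rule: less_n3_cases)
      (auto simp: completion_simps first_end_def last_end_def intro!: tendsto_intros interior)
  moreover have "eventually (\<lambda>t. completion (\<lambda>j. x t (Suc j)) i = x t i) F"
    using rows by eventually_elim (use eq_completion \<open>i < n+3\<close> in auto)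
  ultimately show ?thesis
    by (rule Lim_transform_eventually)
qed

lemma pen_matrix_injective:
  assumes "lam > 0" and eq: "\<forall>i<n+3. lam * mvmult (n+3) P x i + interior_ind n i * x i = 0"
  shows "\<forall>i<n+3. x i = 0"
proof -
  have "lam * bilin (n+3) P x x + (\<Sum>j\<le>n. (x (Suc j))\<^sup>2) = 0"
    using eq by (simp flip: pen_energy)
  moreover have "lam * bilin (n+3) P x x \<ge> 0"
    using assms(1) bilin_nonneg[OF psd] by simp
  moreover have "(\<Sum>j\<le>n. (x (Suc j))\<^sup>2) \<ge> 0"
    by (simp add: sum_nonneg)
  ultimately have "(\<Sum>j\<le>n. (x (Suc j))\<^sup>2) = 0"
    by linarith
  then have interior: "\<And>j. j \<le> n \<Longrightarrow> x (Suc j) = 0"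
    by (simp add: sum_nonneg_eq_0_iff)
  have "mvmult (n+3) P x 0 = 0" "mvmult (n+3) P x (n+2) = 0"
    using eq[rule_format, of 0] eq[rule_format, of "n+2"] assms(1) by (simp_all add: interior_ind_def)
  then have "x i = completion (\<lambda>_. 0) i" if "i < n+3" for i
    using eq_completion[OF _ _ that] completion_cong[OF _ that, of _ "\<lambda>_. 0"] interior by metis
  then show ?thesis
    by (simp add: completion_zero)
qed

lemma Hpen_is_inverse:
  assumes "lam > 0"
  shows "is_inverse (n+3) (pen_matrix n P lam) (Hpen n P lam)"
  unfolding Hpen_eq_minv
proof (intro minv_is_inverse is_inverse_exists)
  fix x
  assume "\<forall>i<n+3. mvmult (n+3) (pen_matrix n P lam) x i = 0"
  then have "\<forall>i<n+3. lam * mvmult (n+3) P x i + interior_ind n i * x i = 0"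
    by (simp add: mvmult_pen_matrix)
  then show "\<forall>i<n+3. x i = 0"
    by (rule pen_matrix_injective[OF assms])
qed

lemma pen_fit_equation:
  assumes "lam > 0" "i < n+3"
  shows "lam * mvmult (n+3) P (pen_fit n P y lam) i + interior_ind n i * pen_fit n P y lam i
         = joinv n 0 y 0 i"
proof -
  have "mvmult (n+3) (pen_matrix n P lam) (pen_fit n P y lam) i = embed0 n y i"
    unfolding pen_fit_def by (rule is_inverse_mvmult_cancel(1)[OF Hpen_is_inverse[OF assms(1)] assms(2)])
  then show ?thesis
    by (simp only: mvmult_pen_matrix[OF assms(2)] embed0_eq_joinv)
qed

lemma pen_fit_end_rows:
  "lam > 0 \<Longrightarrow> mvmult (n+3) P (pen_fit n P y lam) 0 = 0 \<and> mvmult (n+3) P (pen_fit n P y lam) (n+2) = 0"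
  using pen_fit_equation[of lam 0 y] pen_fit_equation[of lam "n+2" y]
  by (simp add: interior_ind_def joinv_def)

lemma pen_fit_interior_row:
  "lam > 0 \<Longrightarrow> j \<le> n \<Longrightarrow> lam * mvmult (n+3) P (pen_fit n P y lam) (Suc j) + pen_fit n P y lam (Suc j) = y j"
  using pen_fit_equation[of lam "Suc j" y] by (simp add: interior_ind_def joinv_def)

lemma pen_fit_energy:
  assumes "lam > 0"
  shows "lam * bilin (n+3) P (pen_fit n P y lam) (pen_fit n P y lam) + (\<Sum>j\<le>n. (pen_fit n P y lam (Suc j))\<^sup>2)
       = (\<Sum>j\<le>n. pen_fit n P y lam (Suc j) * y j)"
proof -
  let ?x = "pen_fit n P y lam"
  have "lam * bilin (n+3) P ?x ?x + (\<Sum>j\<le>n. (?x (Suc j))\<^sup>2) = (\<Sum>i<n+3. ?x i * joinv n 0 y 0 i)"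
    using pen_fit_equation[OF assms] by (simp flip: pen_energy)
  also have "\<dots> = (\<Sum>j\<le>n. ?x (Suc j) * y j)"
    by (simp add: sum_split_ends joinv_def)
  finally show ?thesis .
qed

lemma pen_fit_interior_bound:
  assumes "lam > 0"
  shows "(\<Sum>j\<le>n. (pen_fit n P y lam (Suc j))\<^sup>2) \<le> (\<Sum>j\<le>n. (y j)\<^sup>2)"
proof -
  let ?x = "pen_fit n P y lam"
  have "(\<Sum>j\<le>n. (?x (Suc j))\<^sup>2) \<le> (\<Sum>j\<le>n. ?x (Suc j) * y j)"
    using pen_fit_energy[OF assms, of y] assms bilin_nonneg[OF psd, of ?x]
    by (smt (verit) mult_nonneg_nonneg)
  also have "\<dots> \<le> (\<Sum>j\<le>n. ((?x (Suc j))\<^sup>2 + (y j)\<^sup>2) / 2)"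
  proof (intro sum_mono)
    fix j
    show "?x (Suc j) * y j \<le> ((?x (Suc j))\<^sup>2 + (y j)\<^sup>2) / 2"
      using sum_squares_bound[of "?x (Suc j)" "y j"] by (simp add: power2_eq_square algebra_simps)
  qed
  also have "\<dots> = (\<Sum>j\<le>n. (?x (Suc j))\<^sup>2) / 2 + (\<Sum>j\<le>n. (y j)\<^sup>2) / 2"
    by (simp add: sum_divide_distrib[symmetric] sum.distrib add_divide_distrib)
  finally show ?thesis by linarith
qed

section \<open>The limits lam -> 0 and lam -> infinity\<close>

lemma pen_fit_interior_error:
  assumes "lam > 0"
  shows "(\<Sum>j\<le>n. (pen_fit n P y lam (Suc j) - y j)\<^sup>2)
           \<le> lam\<^sup>2 * (\<Sum>j\<le>n. (mvmult (n+3) P (completion y) (Suc j))\<^sup>2)"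
proof -
  define x where "x = pen_fit n P y lam"
  define d where "d = (\<lambda>i. x i - completion y i)"
  define e where "e = (\<lambda>j. x (Suc j) - y j)"
  define w where "w = (\<lambda>j. mvmult (n+3) P (completion y) (Suc j))"
  have end_rows: "mvmult (n+3) P d 0 = 0" "mvmult (n+3) P d (n+2) = 0"
    using pen_fit_end_rows[OF assms, of y] mvmult_completion_ends
    unfolding d_def x_def mvmult_diff by simp_all
  have interior: "d (Suc j) = e j" "lam * mvmult (n+3) P d (Suc j) = - e j - lam * w j" if "j \<le> n" for j
    using that pen_fit_interior_row[OF assms that, of y]
    unfolding d_def mvmult_diff e_def w_def x_def by (simp_all add: completion_simps algebra_simps)
  have "0 \<le> lam * bilin (n+3) P d d"
    using assms bilin_nonneg[OF psd] by simp
  also have "\<dots> = (\<Sum>j\<le>n. d (Suc j) * (lam * mvmult (n+3) P d (Suc j)))"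
    unfolding bilin_split end_rows by (simp add: sum_distrib_left mult_ac)
  also have "\<dots> = (\<Sum>j\<le>n. e j * (- e j - lam * w j))"
    using interior by (intro sum.cong) simp_all
  also have "\<dots> = (\<Sum>j\<le>n. - (e j)\<^sup>2 - lam * (e j * w j))"
    by (simp add: power2_eq_square algebra_simps)
  also have "\<dots> \<le> (\<Sum>j\<le>n. - (e j)\<^sup>2 / 2 + lam\<^sup>2 * (w j)\<^sup>2 / 2)"
  proof (intro sum_mono)
    fix j
    have "0 \<le> (e j + lam * w j)\<^sup>2" by simp
    then show "- (e j)\<^sup>2 - lam * (e j * w j) \<le> - (e j)\<^sup>2 / 2 + lam\<^sup>2 * (w j)\<^sup>2 / 2"
      by (simp add: power2_eq_square algebra_simps)
  qed
  also have "\<dots> = - (\<Sum>j\<le>n. (e j)\<^sup>2) / 2 + lam\<^sup>2 * (\<Sum>j\<le>n. (w j)\<^sup>2) / 2"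
    by (simp only: sum.distrib sum_negf sum_divide_distrib[symmetric] sum_distrib_left[symmetric])
  finally show ?thesis
    unfolding e_def w_def x_def by simp
qed

lemma pen_fit_tendsto_zero:
  assumes "i < n+3"
  shows "((\<lambda>lam. pen_fit n P y lam i) \<longlongrightarrow> completion y i) (at_right 0)"
proof (rule tendsto_completion[OF _ _ assms])
  have pos: "eventually (\<lambda>lam::real. lam > 0) (at_right 0)"
    by (rule eventually_at_right_less)
  then show "eventually (\<lambda>lam. mvmult (n+3) P (pen_fit n P y lam) 0 = 0
                              \<and> mvmult (n+3) P (pen_fit n P y lam) (n+2) = 0) (at_right 0)"
    by eventually_elim (rule pen_fit_end_rows)
next
  fix j assume "j \<le> n"
  define W where "W = (\<Sum>j\<le>n. (mvmult (n+3) P (completion y) (Suc j))\<^sup>2)"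
  have "W \<ge> 0"
    unfolding W_def by (simp add: sum_nonneg)
  have "eventually (\<lambda>lam. norm (pen_fit n P y lam (Suc j) - y j) \<le> lam * sqrt W) (at_right 0)"
    using eventually_at_right_less
  proof eventually_elim
    case (elim lam)
    have "(pen_fit n P y lam (Suc j) - y j)\<^sup>2 \<le> (\<Sum>k\<le>n. (pen_fit n P y lam (Suc k) - y k)\<^sup>2)"
      by (rule member_le_sum) (use \<open>j \<le> n\<close> in auto)
    also have "\<dots> \<le> (lam * sqrt W)\<^sup>2"
      using pen_fit_interior_error[OF elim] \<open>W \<ge> 0\<close> by (simp add: W_def power_mult_distrib)
    finally show ?case
      using elim \<open>W \<ge> 0\<close> by (simp add: abs_le_square_iff[symmetric])
  qed
  moreover have "((\<lambda>lam. lam * sqrt W) \<longlongrightarrow> 0) (at_right 0)"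
    by (intro tendsto_mult_left_zero tendsto_ident_at)
  ultimately have "((\<lambda>lam. pen_fit n P y lam (Suc j) - y j) \<longlongrightarrow> 0) (at_right 0)"
    by (rule Lim_null_comparison)
  then show "((\<lambda>lam. pen_fit n P y lam (Suc j)) \<longlongrightarrow> y j) (at_right 0)"
    by (rule LIM_zero_cancel)
qed

lemma quadform_completion_le: "quadform (n+3) P (completion y) \<le> quadform (n+3) P (joinv n a y b)"
proof -
  define z where "z = completion y"
  define h where "h = (\<lambda>i. joinv n a y b i - z i)"
  have "h (Suc j) = 0" if "j \<le> n" for j
    using that by (simp add: h_def z_def joinv_def completion_simps)
  then have "bilin (n+3) P h z = 0"
    unfolding bilin_split z_def mvmult_completion_ends by simp
  then have "bilin (n+3) P (\<lambda>i. z i + h i) (\<lambda>i. z i + h i) = bilin (n+3) P z z + bilin (n+3) P h h"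
    using bilin_commute[OF sym, of z h] by (simp add: bilin_add_left bilin_add_right)
  moreover have "(\<lambda>i. z i + h i) = joinv n a y b"
    by (simp add: h_def)
  ultimately show ?thesis
    using bilin_nonneg[OF psd, of h] by (simp add: quadform_eq_bilin z_def)
qed

lemma pen_fit_residual_le:
  assumes "lam > 0" "in_kernel (n+3) P v"
  shows "(\<Sum>i\<le>n. (y i - pen_fit n P y lam (i+1))\<^sup>2) \<le> (\<Sum>i\<le>n. (y i - v (i+1))\<^sup>2)"
proof -
  define x where "x = pen_fit n P y lam"
  define d where "d = (\<lambda>i. v i - x i)"
  have Pd: "mvmult (n+3) P d i = - mvmult (n+3) P x i" if "i < n+3" for i
    using assms(2) that unfolding d_def mvmult_diff in_kernel_def by simp
  have residual_row: "y j - x (Suc j) = lam * mvmult (n+3) P x (Suc j)" if "j \<le> n" for j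
    using pen_fit_interior_row[OF assms(1) that, of y] unfolding x_def by linarith
  \<comment> \<open>the cross term of the expansion is the penalty of x, which has the right sign\<close>
  have "(\<Sum>j\<le>n. d (Suc j) * (y j - x (Suc j))) = lam * bilin (n+3) P d x"
    unfolding bilin_split x_def pen_fit_end_rows[OF assms(1), THEN conjunct1]
      pen_fit_end_rows[OF assms(1), THEN conjunct2]
    using residual_row by (simp add: sum_distrib_left x_def mult_ac)
  also have "bilin (n+3) P d x = bilin (n+3) P x d"
    by (rule bilin_commute[OF sym])
  also have "\<dots> = (\<Sum>i<n+3. - (x i * mvmult (n+3) P x i))"
    unfolding bilin_def using Pd by (intro sum.cong) auto
  also have "\<dots> = - bilin (n+3) P x x"
    by (simp add: bilin_def sum_negf)
  finally have cross: "(\<Sum>j\<le>n. d (Suc j) * (y j - x (Suc j))) = - (lam * bilin (n+3) P x x)"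
    by simp
  have "(\<Sum>i\<le>n. (y i - v (i+1))\<^sup>2)
     = (\<Sum>j\<le>n. (y j - x (Suc j))\<^sup>2 - 2 * (d (Suc j) * (y j - x (Suc j))) + (d (Suc j))\<^sup>2)"
    unfolding d_def by (intro sum.cong) (auto simp: power2_eq_square algebra_simps)
  also have "\<dots> = (\<Sum>j\<le>n. (y j - x (Suc j))\<^sup>2) + 2 * (lam * bilin (n+3) P x x) + (\<Sum>j\<le>n. (d (Suc j))\<^sup>2)"
    by (simp add: sum.distrib sum_subtractf sum_distrib_left[symmetric] cross)
  finally show ?thesis
    using assms(1) bilin_nonneg[OF psd, of x] sum_nonneg[of "{..n}" "\<lambda>j. (d (Suc j))\<^sup>2"]
    unfolding x_def by simp
qed

lemma kernel_least_squares_unique: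
  assumes w: "kernel_least_squares n P y w" and w': "kernel_least_squares n P y w'" and "i < n+3"
  shows "w i = w' i"
proof -
  define c where "c = (\<lambda>i. (1/2) * w i + (1/2) * w' i)"
  have kernel: "in_kernel (n+3) P w" "in_kernel (n+3) P w'" "in_kernel (n+3) P c"
    using w w' unfolding kernel_least_squares_def in_kernel_def c_def mvmult_lincomb by simp_all
  have equal: "(\<Sum>i\<le>n. (y i - w (i+1))\<^sup>2) = (\<Sum>i\<le>n. (y i - w' (i+1))\<^sup>2)"
    using w w' kernel unfolding kernel_least_squares_def by (meson order.antisym)
  \<comment> \<open>parallelogram law: the midpoint improves the residual by a quarter of the squared distance\<close>
  have "(\<Sum>i\<le>n. (y i - c (i+1))\<^sup>2)
      = (\<Sum>i\<le>n. ((y i - w (i+1))\<^sup>2 + (y i - w' (i+1))\<^sup>2) / 2 - ((w (i+1) - w' (i+1)) / 2)\<^sup>2)"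
    unfolding c_def by (intro sum.cong) (auto simp: power2_eq_square field_simps)
  also have "\<dots> = (\<Sum>i\<le>n. (y i - w (i+1))\<^sup>2) - (\<Sum>i\<le>n. ((w (i+1) - w' (i+1)) / 2)\<^sup>2)"
    using equal by (simp add: sum_subtractf sum_divide_distrib[symmetric] sum.distrib)
  finally have "(\<Sum>i\<le>n. ((w (i+1) - w' (i+1)) / 2)\<^sup>2) \<le> 0"
    using w kernel(3) unfolding kernel_least_squares_def by fastforce
  then have "(\<Sum>i\<le>n. ((w (i+1) - w' (i+1)) / 2)\<^sup>2) = 0"
    by (simp add: order_antisym sum_nonneg)
  then have interior: "w (Suc j) = w' (Suc j)" if "j \<le> n" for j
    using that by (simp add: sum_nonneg_eq_0_iff)
  have "w i = completion (\<lambda>j. w (Suc j)) i"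
    using kernel(1) \<open>i < n+3\<close> unfolding in_kernel_def by (intro eq_completion) auto
  also have "\<dots> = completion (\<lambda>j. w' (Suc j)) i"
    using interior \<open>i < n+3\<close> by (rule completion_cong)
  also have "\<dots> = w' i"
    using kernel(2) \<open>i < n+3\<close> unfolding in_kernel_def by (intro eq_completion[symmetric]) auto
  finally show ?thesis .
qed

lemma pen_fit_limit_in_kernel:
  assumes L: "filterlim L at_top sequentially" "\<And>k. L k > 0"
    and lim: "\<And>i. i < n+3 \<Longrightarrow> (\<lambda>k. pen_fit n P y (L k) i) \<longlonglongrightarrow> w i"
  shows "in_kernel (n+3) P w"
  unfolding in_kernel_def
proof (intro allI impI)
  fix i assume i: "i < n+3"
  have "(\<lambda>k. mvmult (n+3) P (pen_fit n P y (L k)) i) \<longlonglongrightarrow> mvmult (n+3) P w i"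
    unfolding mvmult_def by (intro tendsto_sum tendsto_mult tendsto_const lim) auto
  moreover have "mvmult (n+3) P (pen_fit n P y (L k)) i
      = (joinv n 0 y 0 i - interior_ind n i * pen_fit n P y (L k) i) * inverse (L k)" for k
    using pen_fit_equation[OF L(2) i, of k y] L(2)[of k] by (simp add: field_simps)
  moreover have "(\<lambda>k. (joinv n 0 y 0 i - interior_ind n i * pen_fit n P y (L k) i) * inverse (L k))
      \<longlonglongrightarrow> (joinv n 0 y 0 i - interior_ind n i * w i) * 0"
    by (intro tendsto_intros lim i tendsto_inverse_0_at_top L(1))
  ultimately show "mvmult (n+3) P w i = 0"
    using LIMSEQ_unique by auto
qed

lemma pen_fit_limit_point:
  assumes X: "\<forall>k. X k \<ge> 1" "filterlim X at_top sequentially"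
  shows "\<exists>r w. strict_mono r \<and> kernel_least_squares n P y w
               \<and> (\<forall>i<n+3. (\<lambda>k. pen_fit n P y (X (r k)) i) \<longlonglongrightarrow> w i)"
proof -
  have pos: "X k > 0" for k
    using X(1) by (smt (verit))
  have "\<bar>pen_fit n P y (X k) (Suc j)\<bar> \<le> sqrt (\<Sum>j\<le>n. (y j)\<^sup>2)" if "j \<in> {..n}" for k j
  proof -
    have "(pen_fit n P y (X k) (Suc j))\<^sup>2 \<le> (\<Sum>j\<le>n. (pen_fit n P y (X k) (Suc j))\<^sup>2)"
      by (rule member_le_sum) (use that in auto)
    also have "\<dots> \<le> (\<Sum>j\<le>n. (y j)\<^sup>2)"
      by (rule pen_fit_interior_bound[OF pos])
    finally show ?thesis
      by (metis real_sqrt_abs real_sqrt_le_mono)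
  qed
  then obtain r m where r: "strict_mono r" "\<forall>j\<in>{..n}. (\<lambda>k. pen_fit n P y (X (r k)) (Suc j)) \<longlonglongrightarrow> m j"
    using bounded_coordinates_convergent_subseq[of "{..n}" "\<lambda>k j. pen_fit n P y (X k) (Suc j)"] by blast
  have lim: "(\<lambda>k. pen_fit n P y (X (r k)) i) \<longlonglongrightarrow> completion m i" if "i < n+3" for i
    using pen_fit_end_rows[OF pos] r(2) that by (intro tendsto_completion) auto
  have "filterlim (\<lambda>k. X (r k)) at_top sequentially"
    by (rule filterlim_compose[OF X(2) filterlim_subseq[OF r(1)]])
  then have "in_kernel (n+3) P (completion m)"
    using pos lim by (rule pen_fit_limit_in_kernel)
  moreover have "(\<Sum>i\<le>n. (y i - completion m (i+1))\<^sup>2) \<le> (\<Sum>i\<le>n. (y i - v (i+1))\<^sup>2)"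
    if "in_kernel (n+3) P v" for v
  proof (rule LIMSEQ_le_const2)
    show "(\<lambda>k. \<Sum>i\<le>n. (y i - pen_fit n P y (X (r k)) (i+1))\<^sup>2) \<longlonglongrightarrow> (\<Sum>i\<le>n. (y i - completion m (i+1))\<^sup>2)"
      by (intro tendsto_intros lim) auto
    show "\<exists>N. \<forall>k\<ge>N. (\<Sum>i\<le>n. (y i - pen_fit n P y (X (r k)) (i+1))\<^sup>2) \<le> (\<Sum>i\<le>n. (y i - v (i+1))\<^sup>2)"
      using pen_fit_residual_le[OF pos that] by blast
  qed
  ultimately show ?thesis
    using r(1) lim unfolding kernel_least_squares_def by blast
qed

lemma pen_fit_tendsto_top:
  "\<exists>w. kernel_least_squares n P y w \<and> (\<forall>i<n+3. ((\<lambda>lam. pen_fit n P y lam i) \<longlongrightarrow> w i) at_top)"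
proof -
  have "filterlim (\<lambda>k. 1 + real k) at_top sequentially"
    by (rule filterlim_tendsto_add_at_top[OF tendsto_const filterlim_real_sequentially])
  then obtain w where w: "kernel_least_squares n P y w"
    using pen_fit_limit_point[of "\<lambda>k. 1 + real k"] by auto
  have "((\<lambda>lam. pen_fit n P y lam i) \<longlongrightarrow> w i) at_top" if i: "i < n+3" for i
  proof (rule tendsto_at_top_by_subsequences[where c = 1])
    fix X :: "nat \<Rightarrow> real"
    assume "\<forall>k. X k \<ge> 1" "filterlim X at_top sequentially"
    then obtain r w' where "strict_mono r" "kernel_least_squares n P y w'"
        "(\<lambda>k. pen_fit n P y (X (r k)) i) \<longlonglongrightarrow> w' i"
      using pen_fit_limit_point i by blast
    moreover have "w' i = w i"
      using kernel_least_squares_unique[OF _ w i] calculation(2) .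
    ultimately show "\<exists>r. strict_mono r \<and> (\<lambda>k. pen_fit n P y (X (r k)) i) \<longlonglongrightarrow> w i"
      by auto
  qed
  with w show ?thesis
    by blast
qed

end

theorem corollary2:
  fixes n :: nat and P :: rmat and y :: rvec
  assumes "n \<ge> 1"
    and "symmetric_mat (n + 3) P"
    and "nonneg_definite (n + 3) P"
    and "P 0 0 * P (n + 2) (n + 2) - P 0 (n + 2) * P (n + 2) 0 \<noteq> 0"
  shows
    "(\<exists>u1 u2.
        (\<forall>a b. quadform (n + 3) P (joinv n u1 y u2) \<le> quadform (n + 3) P (joinv n a y b))
      \<and> u1 * P 0 0 + u2 * P 0 (n + 2) = - (\<Sum>i\<le>n. y i * P 0 (i + 1))
      \<and> u1 * P (n + 2) 0 + u2 * P (n + 2) (n + 2) = - (\<Sum>i\<le>n. y i * P (n + 2) (i + 1))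
      \<and> (\<forall>i<n + 3. ((\<lambda>lam. mvmult (n + 3) (Hpen n P lam) (embed0 n y) i)
                      \<longlongrightarrow> joinv n u1 y u2 i) (at_right 0))
      \<and> ((\<Sum>i\<le>n. y i * P 0 (i + 1)) \<noteq> 0 \<or> (\<Sum>i\<le>n. y i * P (n + 2) (i + 1)) \<noteq> 0
           \<longrightarrow> \<not> (u1 = 0 \<and> u2 = 0)))
   \<and> (\<exists>x. (\<forall>i<n + 3. mvmult (n + 3) P x i = 0)
      \<and> (\<forall>x'. (\<forall>i<n + 3. mvmult (n + 3) P x' i = 0) \<longrightarrow>
              (\<Sum>i\<le>n. (y i - x (i + 1))\<^sup>2) \<le> (\<Sum>i\<le>n. (y i - x' (i + 1))\<^sup>2))
      \<and> (\<forall>i<n + 3. ((\<lambda>lam. mvmult (n + 3) (Hpen n P lam) (embed0 n y) i)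
                      \<longlongrightarrow> x i) at_top))"
proof -
  interpret spline_penalty n P
    using assms(2-4) by unfold_locales
  have "first_end y * P 0 0 + last_end y * P 0 (n+2) = - coupling 0 y"
     "first_end y * P (n+2) 0 + last_end y * P (n+2) (n+2) = - coupling (n+2) y"
    using end_equations_iff by blast+
  then have "\<exists>u1 u2.
        (\<forall>a b. quadform (n + 3) P (joinv n u1 y u2) \<le> quadform (n + 3) P (joinv n a y b))
      \<and> u1 * P 0 0 + u2 * P 0 (n + 2) = - coupling 0 y
      \<and> u1 * P (n + 2) 0 + u2 * P (n + 2) (n + 2) = - coupling (n + 2) y
      \<and> (\<forall>i<n + 3. ((\<lambda>lam. pen_fit n P y lam i) \<longlongrightarrow> joinv n u1 y u2 i) (at_right 0))
      \<and> (coupling 0 y \<noteq> 0 \<or> coupling (n + 2) y \<noteq> 0 \<longrightarrow> \<not> (u1 = 0 \<and> u2 = 0))"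
    using quadform_completion_le pen_fit_tendsto_zero unfolding completion_def
    by (intro exI[of _ "first_end y"] exI[of _ "last_end y"]) auto
  then show ?thesis
    using pen_fit_tendsto_top[of y]
    unfolding pen_fit_def coupling_def kernel_least_squares_def in_kernel_def conj_assoc
    by (rule conjI)
qed

end
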